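(* Let $X$ be an integral regular projective curve of genus $g$ over $\mathbb{F}_q$ and let $\mathbf{n}_m=(n_0,\dots,n_m)$ ($m\ge0$) be a tuple of positive integers. Then the $\mathbf{n}_m$-derived zeta function satisfies the functional equation $\widehat\zeta^{(\mathbf{n}_m)}_X(1-s)=\widehat\zeta^{(\mathbf{n}_m)}_X(s)$.
   Context: Let $\zeta_X(s)=\sum_{D\ge 0}N(D)^{-s}$ be the Artin zeta function of $X$ ($D$ running over effective divisors) and $\widehat\zeta_X(s)=q^{s(g-1)}\zeta_X(s)$ the complete Artin zeta function, a rational function of $q^{-s}$. Derived zeta functions are defined recursively. For the empty tuple $\mathbf{n}_{-1}=()$ put $q_{\mathbf{n}_{-1}}=q$, $T_{\mathbf{n}_{-1}}=q^{-s}$, $\widehat\zeta^{(\mathbf{n}_{-1})}_X=\widehat\zeta_X$. For a tuple $\mathbf{n}_m=(n_0,\dots,n_m)$ of positive integers ($m\ge 0$) put $\mathbf{n}_{m-1}=(n_0,\dots,n_{m-1})$, $q_{\mathbf{n}_m}=q^{n_0n_1\cdots n_m}$, $T_{\mathbf{n}_m}=q^{-n_0n_1\cdots n_m s}$. Writing $\widehat Z^{(\mathbf{n}_{m-1})}_X(T_{\mathbf{n}_{m-1}}):=\widehat\zeta^{(\mathbf{n}_{m-1})}_X(s)$ (a rational function of $T_{\mathbf{n}_{m-1}}$), set $\widehat\zeta^{(\mathbf{n}_{m-1})}_X(1):=\operatorname{Res}_{T_{\mathbf{n}_{m-1}}=1}\widehat Z^{(\mathbf{n}_{m-1})}_X(T_{\mathbf{n}_{m-1}})$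 and for integers $N\ge 1$, $\widehat v_N:=\prod_{k=1}^{N}\widehat\zeta^{(\mathbf{n}_{m-1})}_X(k)$. Then $$\widehat\zeta^{(\mathbf{n}_m)}_X(s)=q_{\mathbf{n}_{m-1}}^{\binom{n_m}{2}(g-1)}\sum_{a=1}^{n_m}\Biggl(\sum_{\substack{k_1,\dots,k_p>0\\k_1+\cdots+k_p=n_m-a}}\frac{\widehat v_{k_1}\cdots\widehat v_{k_p}}{\prod_{j=1}^{p-1}(1-q_{\mathbf{n}_{m-1}}^{k_j+k_{j+1}})}\cdot\frac{1}{1-q_{\mathbf{n}_{m-1}}^{n_ms-n_m+a+k_p}}\Biggr)\widehat\zeta^{(\mathbf{n}_{m-1})}_X(n_ms-n_m+a)\Biggl(\sum_{\substack{l_1,\dots,l_r>0\\l_1+\cdots+l_r=a-1}}\frac{1}{1-q_{\mathbf{n}_{m-1}}^{-n_ms+n_m-a+1+l_1}}\cdot\frac{\widehat v_{l_1}\cdots\widehat v_{l_r}}{\prod_{j=1}^{r-1}(1-q_{\mathbf{n}_{m-1}}^{l_j+l_{j+1}})}\Biggr),$$ where the inner sums run over ordered tuples of positive integers (of any length) with the indicated sum, and an inner sum over tuples summing to $0$ is defined to be $1$. (For $m=0$ this is the $\mathrm{SL}_{n_0}$-zeta function of $X$, which coincides with the rank $n_0$ non-abelian zeta function of $X$.) *)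

theory Defs
  imports "HOL-Complex_Analysis.Complex_Analysis" "HOL-Computational_Algebra.Polynomial"
begin

text \<open>The curve X over F_q enters only through its zeta function
  Z_X(T) = P(T) / ((1 - T)(1 - q T)), P the L-polynomial of X (integer coefficients).
  All zeta functions are represented as functions of the variable T = q_n^(-s).\<close>

text \<open>Complete Artin zeta function as function of T = q^(-s):
  hat Z_X(T) = T^(1-g) P(T) / ((1-T)(1-qT)), since q^(s(g-1)) = T^(1-g).\<close>
definition base_zhat :: "real \<Rightarrow> nat \<Rightarrow> int poly \<Rightarrow> complex \<Rightarrow> complex" where
  "base_zhat q g P T =
     T powi (1 - int g) * poly (map_poly of_int P) T / ((1 - T) * (1 - of_real q * T))"

definition comps :: "nat \<Rightarrow> nat list set" where
  "comps m = {ks. sum_list ks = m \<and> (\<forall>k\<in>set ks. 0 < k)}"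

text \<open>The special values hat zeta(k) of the previous zeta function (variable T, q-parameter Q):
  hat zeta(1) = residue at T = 1, hat zeta(k) = hat Z(Q^(-k)) for k >= 2.\<close>
definition zval :: "complex \<Rightarrow> (complex \<Rightarrow> complex) \<Rightarrow> nat \<Rightarrow> complex" where
  "zval Q Zp k = (if k = 1 then residue Zp 1 else Zp (Q powi (- int k)))"

definition vhat :: "complex \<Rightarrow> (complex \<Rightarrow> complex) \<Rightarrow> nat \<Rightarrow> complex" where
  "vhat Q Zp N = (\<Prod>k=1..N. zval Q Zp k)"

definition pair_denom :: "complex \<Rightarrow> nat list \<Rightarrow> complex" where
  "pair_denom Q ks = (\<Prod>j<length ks - 1. (1 - Q ^ (ks ! j + ks ! (j + 1))))"

text \<open>Left inner sum, as a function of the new variable T' = Q^(-n s):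
  Q^(n s - n + a + k_p) = Q^(a + k_p - n) / T'.\<close>
definition left_sum :: "complex \<Rightarrow> (complex \<Rightarrow> complex) \<Rightarrow> nat \<Rightarrow> nat \<Rightarrow> complex \<Rightarrow> complex" where
  "left_sum Q Zp n a T =
     (\<Sum>ks\<in>comps (n - a).
        if ks = [] then 1
        else prod_list (map (vhat Q Zp) ks) / pair_denom Q ks
             * (1 / (1 - Q powi (int (a + last ks) - int n) / T)))"

text \<open>Right inner sum: Q^(-n s + n - a + 1 + l_1) = T' * Q^(n - a + 1 + l_1).\<close>
definition right_sum :: "complex \<Rightarrow> (complex \<Rightarrow> complex) \<Rightarrow> nat \<Rightarrow> nat \<Rightarrow> complex \<Rightarrow> complex" where
  "right_sum Q Zp n a T =
     (\<Sum>ls\<in>comps (a - 1).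
        if ls = [] then 1
        else (1 / (1 - T * Q ^ (n - a + 1 + hd ls)))
             * (prod_list (map (vhat Q Zp) ls) / pair_denom Q ls))"

text \<open>One derivation step: from hat Z^(n_(m-1)) (in T = Q^(-s), Q = q_(n_(m-1)))
  to hat Z^(n_m) (in T' = Q^(-n_m s)); note hat zeta^(n_(m-1))(n_m s - n_m + a)
  = hat Z^(n_(m-1))(T' * Q^(n_m - a)).\<close>
definition derive_step :: "nat \<Rightarrow> complex \<Rightarrow> (complex \<Rightarrow> complex) \<Rightarrow> nat \<Rightarrow> complex \<Rightarrow> complex" where
  "derive_step g Q Zp n T =
     Q powi (int (n choose 2) * (int g - 1)) *
     (\<Sum>a=1..n. left_sum Q Zp n a T * Zp (T * Q ^ (n - a)) * right_sum Q Zp n a T)"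

text \<open>Derived zeta function for the tuple given in reversed order (last entry first).\<close>
fun dzhat_rev :: "real \<Rightarrow> nat \<Rightarrow> int poly \<Rightarrow> nat list \<Rightarrow> complex \<Rightarrow> complex" where
  "dzhat_rev q g P [] = base_zhat q g P"
| "dzhat_rev q g P (n # ns) = derive_step g (of_real (q ^ prod_list ns)) (dzhat_rev q g P ns) n"

definition dzhat :: "real \<Rightarrow> nat \<Rightarrow> int poly \<Rightarrow> nat list \<Rightarrow> complex \<Rightarrow> complex" where
  "dzhat q g P ns = dzhat_rev q g P (rev ns)"

definition dzeta :: "real \<Rightarrow> nat \<Rightarrow> int poly \<Rightarrow> nat list \<Rightarrow> complex \<Rightarrow> complex" where
  "dzeta q g P ns s = dzhat q g P ns (of_real (q ^ prod_list ns) powr (- s))"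

end

theory Submission
  imports Defs
begin

text \<open>In the variable \<open>T = Q powr (-s)\<close> the substitution \<open>s \<mapsto> 1 - s\<close> becomes
  \<open>T \<mapsto> 1 / (Q T)\<close>. For the complete Artin zeta function this is the functional equation of the
  L-polynomial. A derivation step with parameter \<open>n\<close> turns \<open>T \<mapsto> 1 / (Q T)\<close>-invariance of
  \<open>Z\<close> into \<open>T \<mapsto> 1 / (Q\<^sup>n T)\<close>-invariance of the new function: the substitution
  \<open>a \<mapsto> n + 1 - a\<close> combined with reversal of the compositions exchanges the left and the right
  inner sums, while the middle factor \<open>Z (T Q^(n-a))\<close> is carried to \<open>Z (T Q^(a-1))\<close> by the
  invariance of \<open>Z\<close>. The special values \<open>vhat\<close> only enter as constants. Hence the identity
  holds for every \<open>s\<close>, the exceptional set can be taken empty, and of the hypotheses only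
  \<open>q > 0\<close> and the functional equation of \<open>P\<close> are needed.\<close>

definition inversion_invariant :: "complex \<Rightarrow> (complex \<Rightarrow> complex) \<Rightarrow> bool" where
  "inversion_invariant Q Z \<longleftrightarrow> (\<forall>T. T \<noteq> 0 \<longrightarrow> Z (1 / (Q * T)) = Z T)"

lemma pair_denom_rev: "pair_denom Q (rev ks) = pair_denom Q ks"
proof -
  let ?L = "length ks"
  let ?f = "\<lambda>j. 1 - Q ^ (ks ! j + ks ! (j + 1))"
  have "pair_denom Q (rev ks) = (\<Prod>j<?L - 1. ?f (?L - 1 - Suc j))"
    unfolding pair_denom_def
  proof (rule prod.cong)
    fix j assume j: "j \<in> {..<?L - 1}"
    then have "rev ks ! j = ks ! (?L - 1 - Suc j + 1)" "rev ks ! (j + 1) = ks ! (?L - 1 - Suc j)"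
      by (auto simp: rev_nth Suc_diff_Suc)
    then show "1 - Q ^ (rev ks ! j + rev ks ! (j + 1)) = ?f (?L - 1 - Suc j)"
      by (simp add: add.commute)
  qed simp
  also have "\<dots> = (\<Prod>j<?L - 1. ?f j)"
    by (rule prod.nat_diff_reindex)
  finally show ?thesis
    unfolding pair_denom_def .
qed

lemma bij_betw_rev_comps: "bij_betw rev (comps m) (comps m)"
  unfolding comps_def by (rule bij_betw_byWitness[where f' = rev]) (auto simp: sum_list_rev)

lemma left_sum_inversion:
  assumes "Q \<noteq> 0" "1 \<le> a" "a \<le> n"
  shows "left_sum Q Z n a (1 / (Q ^ n * T)) = right_sum Q Z n (n + 1 - a) T"
proof -
  have index_shift: "n + 1 - a - 1 = n - a" "n - (n + 1 - a) + 1 = a"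
    using assms by auto
  have denom: "Q powi (int (a + k) - int n) / (1 / (Q ^ n * T)) = T * Q ^ (a + k)" for k
    using assms by (simp add: power_int_diff flip: of_nat_add)
  have "right_sum Q Z n (n + 1 - a) T =
     (\<Sum>ls\<in>comps (n - a). if ls = [] then 1
        else 1 / (1 - T * Q ^ (a + hd ls)) * (prod_list (map (vhat Q Z) ls) / pair_denom Q ls))"
    unfolding right_sum_def index_shift ..
  also have "\<dots> = (\<Sum>ks\<in>comps (n - a). if rev ks = [] then 1
        else 1 / (1 - T * Q ^ (a + hd (rev ks)))
          * (prod_list (map (vhat Q Z) (rev ks)) / pair_denom Q (rev ks)))"
    by (rule sum.reindex_bij_betw[OF bij_betw_rev_comps, symmetric])
  also have "\<dots> = left_sum Q Z n a (1 / (Q ^ n * T))"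
    unfolding left_sum_def denom
    by (rule sum.cong) (simp_all add: pair_denom_rev hd_rev rev_map[symmetric] prod_list.rev)
  finally show ?thesis ..
qed

lemma right_sum_inversion:
  assumes "Q \<noteq> 0" "T \<noteq> 0" "1 \<le> a" "a \<le> n"
  shows "right_sum Q Z n a (1 / (Q ^ n * T)) = left_sum Q Z n (n + 1 - a) T"
proof -
  have "left_sum Q Z n (n + 1 - a) (1 / (Q ^ n * (1 / (Q ^ n * T))))
      = right_sum Q Z n (n + 1 - (n + 1 - a)) (1 / (Q ^ n * T))"
    using assms by (intro left_sum_inversion) auto
  moreover have "1 / (Q ^ n * (1 / (Q ^ n * T))) = T" "n + 1 - (n + 1 - a) = a"
    using assms by auto
  ultimately show ?thesis
    by simp
qed

lemma derive_step_inversion_invariant: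
  assumes "Q \<noteq> 0" and Z: "inversion_invariant Q Z"
  shows "inversion_invariant (Q ^ n) (derive_step g Q Z n)"
  unfolding inversion_invariant_def
proof (intro allI impI)
  fix T :: complex assume T: "T \<noteq> 0"
  let ?T' = "1 / (Q ^ n * T)"
  let ?term = "\<lambda>a. right_sum Q Z n a T * Z (T * Q ^ (n - a)) * left_sum Q Z n a T"
  have "left_sum Q Z n a ?T' * Z (?T' * Q ^ (n - a)) * right_sum Q Z n a ?T' = ?term (n + 1 - a)"
    if a: "a \<in> {1..n}" for a
  proof -
    have "Q ^ n = Q * Q ^ (a - 1) * Q ^ (n - a)"
      using a by (simp flip: power_add power_Suc)
    then have "Z (?T' * Q ^ (n - a)) = Z (1 / (Q * (Q ^ (a - 1) * T)))"
      using \<open>Q \<noteq> 0\<close> by (simp add: field_simps)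
    also have "\<dots> = Z (Q ^ (a - 1) * T)"
      using Z T \<open>Q \<noteq> 0\<close> unfolding inversion_invariant_def by simp
    also have "\<dots> = Z (T * Q ^ (n - (n + 1 - a)))"
      using a by (simp add: mult.commute)
    finally show ?thesis
      using a left_sum_inversion[OF \<open>Q \<noteq> 0\<close>] right_sum_inversion[OF \<open>Q \<noteq> 0\<close> T] by simp
  qed
  then have "(\<Sum>a=1..n. left_sum Q Z n a ?T' * Z (?T' * Q ^ (n - a)) * right_sum Q Z n a ?T')
      = (\<Sum>a=1..n. ?term (n + 1 - a))"
    by (rule sum.cong[OF refl])
  also have "\<dots> = (\<Sum>a=1..n. ?term a)"
    using sum.atLeastAtMost_rev[of ?term 1 n] by (simp add: add.commute)
  finally show "derive_step g Q Z n (1 / (Q ^ n * T)) = derive_step g Q Z n T"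
    unfolding derive_step_def by (simp add: ac_simps)
qed

lemma base_zhat_inversion_invariant:
  fixes q :: real
  assumes "q > 0"
    and FE: "\<forall>T::complex. T \<noteq> 0 \<longrightarrow>
              poly (map_poly of_int P) T
              = of_real q ^ g * T ^ (2 * g) * poly (map_poly of_int P) (1 / (of_real q * T))"
  shows "inversion_invariant (of_real q) (base_zhat q g P)"
  unfolding inversion_invariant_def
proof (intro allI impI)
  fix T :: complex assume T: "T \<noteq> 0"
  define p where "p = poly (map_poly (of_int :: int \<Rightarrow> complex) P)"
  define Q where "Q = (of_real q :: complex)"
  let ?T' = "1 / (Q * T)"
  have Q: "Q \<noteq> 0"
    using \<open>q > 0\<close> by (simp add: Q_def)
  have p: "p T = Q ^ g * T ^ (2 * g) * p ?T'"
    using FE T by (simp add: p_def Q_def)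
  have denom: "(1 - ?T') * (1 - Q * ?T') = (1 - T) * (1 - Q * T) / (Q * T ^ 2)"
    using Q T by (simp add: field_simps power2_eq_square)
  have num: "?T' powi (1 - int g) * p ?T' * (Q * T ^ 2) = T powi (1 - int g) * p T"
    unfolding p using Q T
    by (simp add: power_int_diff field_simps power_mult_distrib power2_eq_square mult_2 mult_2_right power_add)
  show "base_zhat q g P (1 / (of_real q * T)) = base_zhat q g P T"
    unfolding base_zhat_def p_def[symmetric] Q_def[symmetric] denom
    by (simp flip: num)
qed

lemma dzhat_rev_inversion_invariant:
  fixes q :: real
  assumes "q > 0"
    and FE: "\<forall>T::complex. T \<noteq> 0 \<longrightarrow>
              poly (map_poly of_int P) T
              = of_real q ^ g * T ^ (2 * g) * poly (map_poly of_int P) (1 / (of_real q * T))"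
  shows "inversion_invariant (of_real (q ^ prod_list ns)) (dzhat_rev q g P ns)"
proof (induction ns)
  case Nil
  then show ?case
    using base_zhat_inversion_invariant[OF assms] by simp
next
  case (Cons n ns)
  have "(of_real (q ^ prod_list (n # ns)) :: complex) = of_real (q ^ prod_list ns) ^ n"
    by (simp add: power_mult[symmetric] mult.commute)
  then show ?case
    using derive_step_inversion_invariant[OF _ Cons.IH] \<open>q > 0\<close> by simp
qed

lemma powr_one_minus_inversion:
  fixes X s :: complex
  assumes "X \<noteq> 0"
  shows "X powr (- (1 - s)) = 1 / (X * X powr (- s))"
  using assms by (simp add: powr_diff powr_minus field_simps)

theorem theorem2p2:
  fixes q :: real and g :: nat and P :: "int poly" and ns :: "nat list"
  assumes q_pp: "\<exists>p e. prime (p::nat) \<and> 0 < e \<and> q = real (p ^ e)"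
    and deg: "degree P = 2 * g"
    and P0: "coeff P 0 = 1"
    and FE: "\<forall>T::complex. T \<noteq> 0 \<longrightarrow>
              poly (map_poly of_int P) T
              = of_real q ^ g * T ^ (2 * g) * poly (map_poly of_int P) (1 / (of_real q * T))"
    and RH: "\<forall>z::complex. poly (map_poly of_int P) z = 0 \<longrightarrow> norm z = 1 / sqrt q"
    and h_pos: "poly P 1 > 0"
    and ns_ne: "ns \<noteq> []"
    and ns_pos: "\<forall>n\<in>set ns. 0 < n"
  shows "\<exists>F::complex set. finite F \<and>
           (\<forall>s::complex.
              of_real (q ^ prod_list ns) powr (- s) \<notin> F \<and>
              of_real (q ^ prod_list ns) powr (- (1 - s)) \<notin> F \<longrightarrow>
              dzeta q g P ns (1 - s) = dzeta q g P ns s)"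
proof -
  have "q > 0"
    using q_pp prime_gt_0_nat by auto
  define X where "X = (of_real (q ^ prod_list ns) :: complex)"
  have "X \<noteq> 0"
    using \<open>q > 0\<close> by (simp add: X_def)
  have "inversion_invariant X (dzhat q g P ns)"
    using dzhat_rev_inversion_invariant[OF \<open>q > 0\<close> FE, of "rev ns"]
    by (simp add: X_def dzhat_def prod_list.rev)
  moreover have "X powr (- s) \<noteq> 0" for s
    using \<open>X \<noteq> 0\<close> by (simp add: powr_def)
  ultimately have "dzeta q g P ns (1 - s) = dzeta q g P ns s" for s
    unfolding dzeta_def X_def[symmetric] powr_one_minus_inversion[OF \<open>X \<noteq> 0\<close>]
    by (simp add: inversion_invariant_def)
  then show ?thesis
    by blast
qed

end
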